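(* Let $(S,\mathcal{T})$ be a configuration with $|S|=k$ and $\mathcal{T}=(T_1,T_2)$, and let $V_1$ be a fixed total order on $C=\{c_1,\ldots,c_m\}$. Then the number of total orders $V_2$ on $C$ such that the election $(C,(V_1,V_2))$ avoids $(S,\mathcal{T})$ equals $S_m(\pi,\pi^{-1})$, where $\pi=p(T_1,T_2)$.
   Context: An election $(C,\mathcal{P})$ is a set $C$ of candidates with a tuple $\mathcal{P}=(V_1,\ldots,V_n)$ of total orders on $C$. A configuration $(S,\mathcal{T})$ is a finite set $S$ with a tuple $\mathcal{T}=(T_1,\ldots,T_l)$ of total orders on $S$. The election contains the configuration if there are injective maps $f:\{1,\ldots,l\}\to\{1,\ldots,n\}$ and $g:S\to C$ such that for all distinct $x,y\in S$ and all $i$, $T_i$ ranking $x$ above $y$ implies $V_{f(i)}$ ranks $g(x)$ above $g(y)$; otherwise it avoids it. For two total orders $T_1,T_2$ on the same $k$-element set, $p(T_1,T_2)$ is the $k$-permutation mapping $i$ to $j$ whenever the $i$-th highest ranked element of $T_1$ is the $j$-th highest ranked element of $T_2$. A $k$-permutation $\pi$ is contained as a pattern in an $m$-permutation $\tau$ if there is a strictly increasing $\mu:\{1,\ldots,k\}\to\{1,\ldots,m\}$ with $(\mu(\pi(1)),\ldots,\mu(\pi(k)))$ a subsequence of $(\tau(1),\ldots,\tau(m))$. $S_m(\pi_1,\ldots,\pi_l)$ denotes the number of $m$-permutations avoiding (not containing) each of the patterns $\pi_1,\ldots,\pi_l$. *)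

theory Defs
  imports Main "HOL-Combinatorics.Permutations"
begin

text \<open>The pair (x,y) in R means that
x is ranked at least as high as y; for distinct x, y it means "x is ranked above y".\<close>

text \<open>Elections and configurations: the tuple of orders is a list (0-indexed).
The election (C, Ps) contains the configuration (S, Ts).\<close>
definition election_contains ::
  "'b set \<Rightarrow> ('b \<times> 'b) set list \<Rightarrow> 'a set \<Rightarrow> ('a \<times> 'a) set list \<Rightarrow> bool" where
  "election_contains C Ps S Ts \<longleftrightarrow>
     (\<exists>f g. inj_on f {..<length Ts} \<and> f ` {..<length Ts} \<subseteq> {..<length Ps} \<and>
            inj_on g S \<and> g ` S \<subseteq> C \<and>
            (\<forall>i<length Ts. \<forall>x\<in>S. \<forall>y\<in>S. x \<noteq> y \<longrightarrow> (x, y) \<in> Ts ! i \<longrightarrow>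
                 (g x, g y) \<in> Ps ! (f i)))"

definition election_avoids ::
  "'b set \<Rightarrow> ('b \<times> 'b) set list \<Rightarrow> 'a set \<Rightarrow> ('a \<times> 'a) set list \<Rightarrow> bool" where
  "election_avoids C Ps S Ts \<longleftrightarrow> \<not> election_contains C Ps S Ts"

text \<open>Position (1 = highest) of x in the total order T on S.\<close>
definition rank_in :: "'a set \<Rightarrow> ('a \<times> 'a) set \<Rightarrow> 'a \<Rightarrow> nat" where
  "rank_in S T x = card {y \<in> S. (y, x) \<in> T}"

definition ith_highest :: "'a set \<Rightarrow> ('a \<times> 'a) set \<Rightarrow> nat \<Rightarrow> 'a" where
  "ith_highest S T i = (THE x. x \<in> S \<and> rank_in S T x = i)"

text \<open>p(T1,T2) as a permutation of {1..k}, k = card S (identity outside {1..k}).\<close>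
definition perm_of_orders :: "'a set \<Rightarrow> ('a \<times> 'a) set \<Rightarrow> ('a \<times> 'a) set \<Rightarrow> nat \<Rightarrow> nat" where
  "perm_of_orders S T1 T2 i =
     (if i \<in> {1..card S} then rank_in S T2 (ith_highest S T1 i) else i)"

text \<open>The k-permutation pi is contained as a pattern in the m-permutation tau:
there are strictly increasing mu : {1..k} -> {1..m} and an index selection nu
(strictly increasing, witnessing the subsequence) with tau(nu j) = mu(pi j).\<close>
definition pattern_contains :: "nat \<Rightarrow> (nat \<Rightarrow> nat) \<Rightarrow> nat \<Rightarrow> (nat \<Rightarrow> nat) \<Rightarrow> bool" where
  "pattern_contains k \<pi> m \<tau> \<longleftrightarrow>
     (\<exists>\<mu> \<nu>. strict_mono_on {1..k} \<mu> \<and> \<mu> ` {1..k} \<subseteq> {1..m} \<and>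
            strict_mono_on {1..k} \<nu> \<and> \<nu> ` {1..k} \<subseteq> {1..m} \<and>
            (\<forall>j\<in>{1..k}. \<tau> (\<nu> j) = \<mu> (\<pi> j)))"

definition num_avoiding :: "nat \<Rightarrow> nat \<Rightarrow> (nat \<Rightarrow> nat) list \<Rightarrow> nat" where
  "num_avoiding m k ps =
     card {\<tau>. \<tau> permutes {1..m} \<and> (\<forall>\<pi>\<in>set ps. \<not> pattern_contains k \<pi> m \<tau>)}"

end

theory Submission
  imports Defs
begin

text \<open>Ranking the elements of a finite linear order identifies it with a permutation,
and an injection of one pair of orders into another corresponds, via ranks, to an
occurrence of the pattern p(T1,T2) in p(V1,V2). With two voters the injection into the
voters may be the identity or the swap; swapping T1 and T2 inverts p(T1,T2). Finally
V2 \<mapsto> p(V1,V2) is a bijection from the linear orders on C onto the permutations of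
{1..|C|}, so it maps the orders V2 avoiding the configuration onto the permutations
avoiding \<pi> and \<pi>\<inverse>.\<close>

lemma linear_order_onD:
  assumes "linear_order_on S T"
  shows "T \<subseteq> S \<times> S" "\<And>x. x \<in> S \<Longrightarrow> (x, x) \<in> T" "trans T" "antisym T"
    "\<And>x y. x \<in> S \<Longrightarrow> y \<in> S \<Longrightarrow> x \<noteq> y \<Longrightarrow> (x, y) \<in> T \<or> (y, x) \<in> T"
  using assms unfolding linear_order_on_def partial_order_on_def preorder_on_def refl_on_def total_on_def
  by auto

lemma rank_in_range:
  assumes "finite S" "linear_order_on S T" "x \<in> S"
  shows "rank_in S T x \<in> {1..card S}"
proof -
  have "x \<in> {y \<in> S. (y, x) \<in> T}" using linear_order_onD(2)[OF assms(2,3)] assms(3) by simp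
  then have "card {y \<in> S. (y, x) \<in> T} \<ge> 1"
    using assms(1) by (auto simp: Suc_le_eq card_gt_0_iff)
  moreover have "card {y \<in> S. (y, x) \<in> T} \<le> card S" using assms(1) by (intro card_mono) auto
  ultimately show ?thesis unfolding rank_in_def by simp
qed

lemma rank_in_le_iff:
  assumes "finite S" "linear_order_on S T" "x \<in> S" "y \<in> S"
  shows "rank_in S T x \<le> rank_in S T y \<longleftrightarrow> (x, y) \<in> T"
proof
  assume xy: "(x, y) \<in> T"
  have "{z \<in> S. (z, x) \<in> T} \<subseteq> {z \<in> S. (z, y) \<in> T}"
    using xy linear_order_onD(3)[OF assms(2)] by (auto dest: transD)
  then show "rank_in S T x \<le> rank_in S T y"
    unfolding rank_in_def using assms(1) by (intro card_mono) auto
next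
  assume le: "rank_in S T x \<le> rank_in S T y"
  show "(x, y) \<in> T"
  proof (rule ccontr)
    assume n: "(x, y) \<notin> T"
    then have "(y, x) \<in> T"
      using linear_order_onD(2,5)[OF assms(2)] assms(3,4) by blast
    then have "{z \<in> S. (z, y) \<in> T} \<subset> {z \<in> S. (z, x) \<in> T}"
      using n assms(3) linear_order_onD(2,3)[OF assms(2)] by (auto dest: transD)
    then have "rank_in S T y < rank_in S T x"
      unfolding rank_in_def using assms(1) by (intro psubset_card_mono) auto
    then show False using le by simp
  qed
qed

lemma inj_on_rank_in:
  assumes "finite S" "linear_order_on S T"
  shows "inj_on (rank_in S T) S"
proof (rule inj_onI)
  fix x y assume "x \<in> S" "y \<in> S" "rank_in S T x = rank_in S T y"
  then have "(x, y) \<in> T" "(y, x) \<in> T" using rank_in_le_iff[OF assms] by (metis order_refl)+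
  then show "x = y" using linear_order_onD(4)[OF assms(2)] by (auto dest: antisymD)
qed

lemma rank_in_less_iff:
  assumes "finite S" "linear_order_on S T" "x \<in> S" "y \<in> S"
  shows "rank_in S T x < rank_in S T y \<longleftrightarrow> (x, y) \<in> T \<and> x \<noteq> y"
  using rank_in_le_iff[OF assms] inj_on_rank_in[OF assms(1,2)] assms(3,4)
  by (metis inj_on_eq_iff order_less_le)

lemma bij_betw_rank_in:
  assumes "finite S" "linear_order_on S T"
  shows "bij_betw (rank_in S T) S {1..card S}"
proof -
  have "rank_in S T ` S \<subseteq> {1..card S}" using rank_in_range[OF assms] by auto
  moreover have "card (rank_in S T ` S) = card {1..card S}"
    using card_image[OF inj_on_rank_in[OF assms]] by simp
  ultimately show ?thesis
    using inj_on_rank_in[OF assms] unfolding bij_betw_def by (simp add: card_subset_eq)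
qed

lemma ith_highest_rank_in:
  assumes "finite S" "linear_order_on S T" "x \<in> S"
  shows "ith_highest S T (rank_in S T x) = x"
  unfolding ith_highest_def
  using assms inj_on_rank_in[OF assms(1,2)] by (intro the_equality) (auto dest: inj_onD)

lemma ith_highest_in:
  assumes "finite S" "linear_order_on S T" "i \<in> {1..card S}"
  shows "ith_highest S T i \<in> S" and "rank_in S T (ith_highest S T i) = i"
proof -
  obtain x where "x \<in> S" "rank_in S T x = i"
    using bij_betw_rank_in[OF assms(1,2)] assms(3) by (metis bij_betw_iff_bijections)
  then show "ith_highest S T i \<in> S" "rank_in S T (ith_highest S T i) = i"
    using ith_highest_rank_in[OF assms(1,2)] by auto
qed

lemma perm_of_orders_rank_in:
  assumes "finite S" "linear_order_on S A1" "linear_order_on S A2" "x \<in> S"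
  shows "perm_of_orders S A1 A2 (rank_in S A1 x) = rank_in S A2 x"
  using rank_in_range[OF assms(1,2,4)] ith_highest_rank_in[OF assms(1,2,4)]
  unfolding perm_of_orders_def by simp

lemma perm_of_orders_permutes:
  assumes "finite S" "linear_order_on S A1" "linear_order_on S A2"
  shows "perm_of_orders S A1 A2 permutes {1..card S}"
proof (rule bij_imp_permutes)
  have "bij_betw (ith_highest S A1) {1..card S} S"
    using ith_highest_in[OF assms(1,2)] ith_highest_rank_in[OF assms(1,2)]
      rank_in_range[OF assms(1,2)]
    by (intro bij_betwI[where g = "rank_in S A1"]) auto
  then have "bij_betw (rank_in S A2 \<circ> ith_highest S A1) {1..card S} {1..card S}"
    using bij_betw_rank_in[OF assms(1,3)] by (rule bij_betw_trans)
  then show "bij_betw (perm_of_orders S A1 A2) {1..card S} {1..card S}"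
    by (rule bij_betw_cong[THEN iffD1, rotated]) (simp add: perm_of_orders_def)
qed (auto simp: perm_of_orders_def)

lemma inv_perm_of_orders:
  assumes "finite S" "linear_order_on S A1" "linear_order_on S A2"
  shows "inv (perm_of_orders S A1 A2) = perm_of_orders S A2 A1"
proof (rule permutes_invI[OF perm_of_orders_permutes[OF assms]])
  fix i assume "i \<in> {1..card S}"
  then obtain x where "x \<in> S" "i = rank_in S A1 x"
    using ith_highest_in[OF assms(1,2)] by metis
  then show "perm_of_orders S A2 A1 (perm_of_orders S A1 A2 i) = i"
    using perm_of_orders_rank_in assms by metis
qed (auto simp: perm_of_orders_def)

definition preserves_order :: "'a set \<Rightarrow> ('a \<times> 'a) set \<Rightarrow> ('b \<times> 'b) set \<Rightarrow> ('a \<Rightarrow> 'b) \<Rightarrow> bool" where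
  "preserves_order S A B g \<longleftrightarrow> (\<forall>x\<in>S. \<forall>y\<in>S. x \<noteq> y \<longrightarrow> (x, y) \<in> A \<longrightarrow> (g x, g y) \<in> B)"

definition embeds_pair ::
  "'a set \<Rightarrow> ('a \<times> 'a) set \<Rightarrow> ('a \<times> 'a) set \<Rightarrow> 'b set \<Rightarrow> ('b \<times> 'b) set \<Rightarrow> ('b \<times> 'b) set \<Rightarrow> bool" where
  "embeds_pair S A1 A2 C B1 B2 \<longleftrightarrow>
     (\<exists>g. inj_on g S \<and> g ` S \<subseteq> C \<and> preserves_order S A1 B1 g \<and> preserves_order S A2 B2 g)"

lemma strict_mono_on_comp_ith_highest_iff:
  assumes "finite S" "linear_order_on S A"
  shows "strict_mono_on {1..card S} (h \<circ> ith_highest S A) \<longleftrightarrow>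
           (\<forall>x\<in>S. \<forall>y\<in>S. (x, y) \<in> A \<and> x \<noteq> y \<longrightarrow> h x < h y)"
proof
  assume mono: "strict_mono_on {1..card S} (h \<circ> ith_highest S A)"
  show "\<forall>x\<in>S. \<forall>y\<in>S. (x, y) \<in> A \<and> x \<noteq> y \<longrightarrow> h x < h y"
  proof (intro ballI impI)
    fix x y assume x: "x \<in> S" and y: "y \<in> S" and "(x, y) \<in> A \<and> x \<noteq> y"
    then have "rank_in S A x < rank_in S A y" using rank_in_less_iff[OF assms] by blast
    then have "h (ith_highest S A (rank_in S A x)) < h (ith_highest S A (rank_in S A y))"
      using strict_mono_onD[OF mono] rank_in_range[OF assms] x y by simp
    then show "h x < h y" using ith_highest_rank_in[OF assms] x y by simp
  qed
next
  assume hyp: "\<forall>x\<in>S. \<forall>y\<in>S. (x, y) \<in> A \<and> x \<noteq> y \<longrightarrow> h x < h y"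
  show "strict_mono_on {1..card S} (h \<circ> ith_highest S A)"
  proof (intro strict_mono_onI)
    fix i j assume i: "i \<in> {1..card S}" and j: "j \<in> {1..card S}" and "i < j"
    then have "(ith_highest S A i, ith_highest S A j) \<in> A \<and> ith_highest S A i \<noteq> ith_highest S A j"
      using ith_highest_in[OF assms] rank_in_less_iff[OF assms] by metis
    then show "(h \<circ> ith_highest S A) i < (h \<circ> ith_highest S A) j"
      using ith_highest_in(1)[OF assms] i j hyp by simp
  qed
qed

lemma preserves_order_iff_strict_mono_on:
  assumes "finite S" "finite C" "linear_order_on S A" "linear_order_on C B"
    and "inj_on g S" "g ` S \<subseteq> C"
  shows "preserves_order S A B g \<longleftrightarrow>
           strict_mono_on {1..card S} (rank_in C B \<circ> g \<circ> ith_highest S A)"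
proof -
  have "preserves_order S A B g \<longleftrightarrow>
          (\<forall>x\<in>S. \<forall>y\<in>S. (x, y) \<in> A \<and> x \<noteq> y \<longrightarrow> rank_in C B (g x) < rank_in C B (g y))"
  proof -
    have "rank_in C B (g x) < rank_in C B (g y) \<longleftrightarrow> (g x, g y) \<in> B"
      if "x \<in> S" "y \<in> S" "x \<noteq> y" for x y
    proof -
      have "g x \<in> C" "g y \<in> C" "g x \<noteq> g y" using that assms(5,6) by (auto dest: inj_onD)
      then show ?thesis using rank_in_less_iff[OF assms(2,4)] by simp
    qed
    then show ?thesis unfolding preserves_order_def by blast
  qed
  then show ?thesis
    using strict_mono_on_comp_ith_highest_iff[OF assms(1,3), of "rank_in C B \<circ> g"] by simp
qed

lemma pattern_contains_if_embeds_pair: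
  assumes fS: "finite S" and fC: "finite C"
    and A1: "linear_order_on S A1" and A2: "linear_order_on S A2"
    and B1: "linear_order_on C B1" and B2: "linear_order_on C B2"
    and "embeds_pair S A1 A2 C B1 B2"
  shows "pattern_contains (card S) (perm_of_orders S A1 A2) (card C) (perm_of_orders C B1 B2)"
proof -
  obtain g where inj: "inj_on g S" and gS: "g ` S \<subseteq> C"
    and p1: "preserves_order S A1 B1 g" and p2: "preserves_order S A2 B2 g"
    using assms(7) unfolding embeds_pair_def by blast
  define \<nu> where "\<nu> = rank_in C B1 \<circ> g \<circ> ith_highest S A1"
  define \<mu> where "\<mu> = rank_in C B2 \<circ> g \<circ> ith_highest S A2"
  have range: "(rank_in C B \<circ> g \<circ> ith_highest S A) ` {1..card S} \<subseteq> {1..card C}"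
    if "linear_order_on S A" "linear_order_on C B" for A B
    using rank_in_range[OF fC that(2)] ith_highest_in(1)[OF fS that(1)] gS by (auto simp del: atLeastAtMost_iff)
  have "perm_of_orders C B1 B2 (\<nu> j) = \<mu> (perm_of_orders S A1 A2 j)" if j: "j \<in> {1..card S}" for j
  proof -
    define x where "x = ith_highest S A1 j"
    have x: "x \<in> S" "j = rank_in S A1 x" using ith_highest_in[OF fS A1 j] x_def by auto
    then show ?thesis
      unfolding \<nu>_def \<mu>_def using gS ith_highest_rank_in[OF fS] fS fC A1 A2 B1 B2
      by (simp add: perm_of_orders_rank_in image_subset_iff)
  qed
  moreover have "strict_mono_on {1..card S} \<nu>" "strict_mono_on {1..card S} \<mu>"
    unfolding \<nu>_def \<mu>_def using preserves_order_iff_strict_mono_on inj gS p1 p2 assms(1-6) by blast+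
  ultimately show ?thesis
    unfolding pattern_contains_def \<nu>_def \<mu>_def using range A1 A2 B1 B2 by blast
qed

lemma embeds_pair_if_pattern_contains:
  assumes fS: "finite S" and fC: "finite C"
    and A1: "linear_order_on S A1" and A2: "linear_order_on S A2"
    and B1: "linear_order_on C B1" and B2: "linear_order_on C B2"
    and "pattern_contains (card S) (perm_of_orders S A1 A2) (card C) (perm_of_orders C B1 B2)"
  shows "embeds_pair S A1 A2 C B1 B2"
proof -
  obtain \<mu> \<nu> where \<mu>: "strict_mono_on {1..card S} \<mu>"
    and \<nu>: "strict_mono_on {1..card S} \<nu>" "\<nu> ` {1..card S} \<subseteq> {1..card C}"
    and eq: "\<forall>j\<in>{1..card S}. perm_of_orders C B1 B2 (\<nu> j) = \<mu> (perm_of_orders S A1 A2 j)"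
    using assms(7) unfolding pattern_contains_def by blast
  define g where "g = ith_highest C B1 \<circ> \<nu> \<circ> rank_in S A1"
  have gC: "g x \<in> C" and rank1: "rank_in C B1 (g x) = \<nu> (rank_in S A1 x)" if "x \<in> S" for x
  proof -
    have "\<nu> (rank_in S A1 x) \<in> {1..card C}" using \<nu>(2) rank_in_range[OF fS A1 that] by blast
    then show "g x \<in> C" "rank_in C B1 (g x) = \<nu> (rank_in S A1 x)"
      using ith_highest_in[OF fC B1] unfolding g_def by simp_all
  qed
  have rank2: "rank_in C B2 (g x) = \<mu> (rank_in S A2 x)" if x: "x \<in> S" for x
  proof -
    have "rank_in C B2 (g x) = perm_of_orders C B1 B2 (\<nu> (rank_in S A1 x))"
      using perm_of_orders_rank_in[OF fC B1 B2 gC[OF x]] rank1[OF x] by simp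
    also have "\<dots> = \<mu> (perm_of_orders S A1 A2 (rank_in S A1 x))"
      using eq rank_in_range[OF fS A1 x] by simp
    finally show ?thesis using perm_of_orders_rank_in[OF fS A1 A2 x] by simp
  qed
  have inj: "inj_on g S"
  proof (rule inj_onI)
    fix x y assume x: "x \<in> S" and y: "y \<in> S" and "g x = g y"
    then have "\<nu> (rank_in S A1 x) = \<nu> (rank_in S A1 y)" using rank1 by metis
    then have "rank_in S A1 x = rank_in S A1 y"
      using strict_mono_on_eqD[OF \<nu>(1)] rank_in_range[OF fS A1] x y by metis
    then show "x = y" using inj_on_rank_in[OF fS A1] x y by (auto dest: inj_onD)
  qed
  have "strict_mono_on {1..card S} (rank_in C B \<circ> g \<circ> ith_highest S A)"
    if "linear_order_on S A" "linear_order_on C B" and mono: "strict_mono_on {1..card S} \<kappa>"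
      and rank: "\<And>x. x \<in> S \<Longrightarrow> rank_in C B (g x) = \<kappa> (rank_in S A x)" for A B \<kappa>
  proof (rule strict_mono_onI)
    fix i j assume "i \<in> {1..card S}" "j \<in> {1..card S}" "i < j"
    then show "(rank_in C B \<circ> g \<circ> ith_highest S A) i < (rank_in C B \<circ> g \<circ> ith_highest S A) j"
      using ith_highest_in[OF fS that(1)] rank strict_mono_onD[OF mono] by simp
  qed
  then have "preserves_order S A1 B1 g" "preserves_order S A2 B2 g"
    using preserves_order_iff_strict_mono_on[OF fS fC _ _ inj] gC rank1 rank2 \<mu> \<nu>(1) A1 A2 B1 B2
    by blast+
  then show ?thesis unfolding embeds_pair_def using inj gC by blast
qed

lemma embeds_pair_iff_pattern_contains:
  assumes "finite S" "finite C"
    and "linear_order_on S A1" "linear_order_on S A2"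
    and "linear_order_on C B1" "linear_order_on C B2"
  shows "embeds_pair S A1 A2 C B1 B2 \<longleftrightarrow>
           pattern_contains (card S) (perm_of_orders S A1 A2) (card C) (perm_of_orders C B1 B2)"
  using pattern_contains_if_embeds_pair[OF assms] embeds_pair_if_pattern_contains[OF assms] by blast

lemma election_contains_two_voters_iff:
  "election_contains C [V1, V2] S [T1, T2] \<longleftrightarrow>
     embeds_pair S T1 T2 C V1 V2 \<or> embeds_pair S T2 T1 C V1 V2"
proof
  assume "election_contains C [V1, V2] S [T1, T2]"
  then obtain f g where f: "inj_on f {..<2}" "f ` {..<2} \<subseteq> {..<2}"
    and g: "inj_on g S" "g ` S \<subseteq> C"
    and pres: "\<And>i. i < 2 \<Longrightarrow> preserves_order S ([T1, T2] ! i) ([V1, V2] ! f i) g"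
    unfolding election_contains_def preserves_order_def by (auto simp: numeral_2_eq_2)
  have "f 0 < 2" "f 1 < 2" "f 0 \<noteq> f 1" using f by (auto simp: image_subset_iff dest: inj_onD)
  then consider "f 0 = 0" "f 1 = 1" | "f 0 = 1" "f 1 = 0" by linarith
  then show "embeds_pair S T1 T2 C V1 V2 \<or> embeds_pair S T2 T1 C V1 V2"
    using pres[of 0] pres[of 1] g unfolding embeds_pair_def by cases auto
next
  have contains: "election_contains C [V1, V2] S [T1, T2]"
    if f: "inj_on f {..<2::nat}" "f ` {..<2} \<subseteq> {..<2}"
      and emb: "embeds_pair S T1 T2 C ([V1, V2] ! f 0) ([V1, V2] ! f 1)" for f
  proof -
    obtain g where "inj_on g S" "g ` S \<subseteq> C"
      "preserves_order S T1 ([V1, V2] ! f 0) g" "preserves_order S T2 ([V1, V2] ! f 1) g"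
      using emb unfolding embeds_pair_def by blast
    then show ?thesis
      unfolding election_contains_def preserves_order_def using f
      by (intro exI[of _ f] exI[of _ g]) (auto simp: numeral_2_eq_2 less_Suc_eq)
  qed
  have swap: "inj_on (\<lambda>i. 1 - i) {..<2::nat}" "(\<lambda>i. 1 - i) ` {..<2::nat} \<subseteq> {..<2}"
    by (auto simp: inj_on_def)
  assume "embeds_pair S T1 T2 C V1 V2 \<or> embeds_pair S T2 T1 C V1 V2"
  then show "election_contains C [V1, V2] S [T1, T2]"
    using contains[of id] contains[OF swap] unfolding embeds_pair_def by auto
qed

lemma linear_order_on_eq_rank_in_le:
  assumes "finite C" "linear_order_on C V"
  shows "V = {(x, y). x \<in> C \<and> y \<in> C \<and> rank_in C V x \<le> rank_in C V y}"
  using linear_order_onD(1)[OF assms(2)] rank_in_le_iff[OF assms] by auto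

lemma linear_order_on_pullback:
  assumes "bij_betw h C {1..card C}"
  shows "linear_order_on C {(x, y). x \<in> C \<and> y \<in> C \<and> h x \<le> h y}"
    and "x \<in> C \<Longrightarrow> rank_in C {(x, y). x \<in> C \<and> y \<in> C \<and> h x \<le> h y} x = h x"
proof -
  let ?V = "{(x, y). x \<in> C \<and> y \<in> C \<and> h x \<le> h y}"
  have inj: "inj_on h C" using assms by (rule bij_betw_imp_inj_on)
  then show "linear_order_on C ?V"
    unfolding linear_order_on_def partial_order_on_def preorder_on_def refl_on_def
      total_on_def trans_def antisym_def
    by (auto dest: inj_onD)
  assume x: "x \<in> C"
  have "h ` {y \<in> C. h y \<le> h x} = {1..h x}"
  proof
    show "h ` {y \<in> C. h y \<le> h x} \<subseteq> {1..h x}" using assms bij_betwE by fastforce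
    show "{1..h x} \<subseteq> h ` {y \<in> C. h y \<le> h x}"
    proof
      fix r assume r: "r \<in> {1..h x}"
      then have "r \<in> {1..card C}" using assms x bij_betwE by fastforce
      then obtain y where "y \<in> C" "h y = r" using assms by (metis bij_betw_iff_bijections)
      then show "r \<in> h ` {y \<in> C. h y \<le> h x}" using r by auto
    qed
  qed
  moreover have "inj_on h {y \<in> C. h y \<le> h x}" using inj by (rule inj_on_subset) auto
  moreover have "{y \<in> C. (y, x) \<in> ?V} = {y \<in> C. h y \<le> h x}" using x by auto
  ultimately show "rank_in C ?V x = h x"
    unfolding rank_in_def by (metis card_image card_atLeastAtMost diff_Suc_1)
qed

lemma bij_betw_perm_of_orders:
  assumes fC: "finite C" and V1: "linear_order_on C V1"
  shows "bij_betw (perm_of_orders C V1) {V. linear_order_on C V} {\<tau>. \<tau> permutes {1..card C}}"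
proof (rule bij_betw_imageI)
  show "inj_on (perm_of_orders C V1) {V. linear_order_on C V}"
  proof (rule inj_onI)
    fix V V' assume V: "V \<in> {V. linear_order_on C V}" and V': "V' \<in> {V. linear_order_on C V}"
      and eq: "perm_of_orders C V1 V = perm_of_orders C V1 V'"
    then have rank: "rank_in C V x = rank_in C V' x" if "x \<in> C" for x
      using perm_of_orders_rank_in[OF fC V1 _ that] by (metis mem_Collect_eq)
    have "V = {(x, y). x \<in> C \<and> y \<in> C \<and> rank_in C V x \<le> rank_in C V y}"
      using linear_order_on_eq_rank_in_le[OF fC] V by blast
    also have "\<dots> = {(x, y). x \<in> C \<and> y \<in> C \<and> rank_in C V' x \<le> rank_in C V' y}"
      using rank by auto
    also have "\<dots> = V'"
      using linear_order_on_eq_rank_in_le[OF fC] V' by blast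
    finally show "V = V'" .
  qed
next
  show "perm_of_orders C V1 ` {V. linear_order_on C V} = {\<tau>. \<tau> permutes {1..card C}}"
  proof
    show "perm_of_orders C V1 ` {V. linear_order_on C V} \<subseteq> {\<tau>. \<tau> permutes {1..card C}}"
      using perm_of_orders_permutes[OF fC V1] by auto
    show "{\<tau>. \<tau> permutes {1..card C}} \<subseteq> perm_of_orders C V1 ` {V. linear_order_on C V}"
    proof
      fix \<tau> assume "\<tau> \<in> {\<tau>. \<tau> permutes {1..card C}}"
      then have \<tau>: "\<tau> permutes {1..card C}" by simp
      then have "bij_betw (\<tau> \<circ> rank_in C V1) C {1..card C}"
        using bij_betw_trans[OF bij_betw_rank_in[OF fC V1] permutes_imp_bij] by blast
      note V = linear_order_on_pullback[OF this]
      let ?V = "{(x, y). x \<in> C \<and> y \<in> C \<and> (\<tau> \<circ> rank_in C V1) x \<le> (\<tau> \<circ> rank_in C V1) y}"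
      have "perm_of_orders C V1 ?V = \<tau>"
      proof
        fix i
        show "perm_of_orders C V1 ?V i = \<tau> i"
        proof (cases "i \<in> {1..card C}")
          case True
          then show ?thesis
            using ith_highest_in[OF fC V1 True] V(2) unfolding perm_of_orders_def by simp
        next
          case False
          then show ?thesis using permutes_not_in[OF \<tau>] unfolding perm_of_orders_def by auto
        qed
      qed
      then show "\<tau> \<in> perm_of_orders C V1 ` {V. linear_order_on C V}"
        using V(1) by (intro image_eqI[of _ _ ?V]) auto
    qed
  qed
qed

theorem mainTheorem3:
  fixes S :: "'a set" and C :: "'b set"
    and T1 T2 :: "('a \<times> 'a) set" and V1 :: "('b \<times> 'b) set"
  assumes "finite S" and "finite C"
    and "linear_order_on S T1" and "linear_order_on S T2"
    and "linear_order_on C V1"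
  shows "card {V2. linear_order_on C V2 \<and> election_avoids C [V1, V2] S [T1, T2]}
       = num_avoiding (card C) (card S)
           [perm_of_orders S T1 T2, inv (perm_of_orders S T1 T2)]"
proof -
  let ?\<pi> = "perm_of_orders S T1 T2"
  have avoids_iff: "election_avoids C [V1, V2] S [T1, T2] \<longleftrightarrow>
      (\<forall>\<pi>\<in>set [?\<pi>, inv ?\<pi>]. \<not> pattern_contains (card S) \<pi> (card C) (perm_of_orders C V1 V2))"
    if "linear_order_on C V2" for V2
    using assms that
    by (simp add: election_avoids_def election_contains_two_voters_iff
        embeds_pair_iff_pattern_contains inv_perm_of_orders)
  have "bij_betw (perm_of_orders C V1)
      {V2 \<in> {V. linear_order_on C V}. election_avoids C [V1, V2] S [T1, T2]}
      {\<tau> \<in> {\<tau>. \<tau> permutes {1..card C}}.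
         \<forall>\<pi>\<in>set [?\<pi>, inv ?\<pi>]. \<not> pattern_contains (card S) \<pi> (card C) \<tau>}"
    using avoids_iff by (intro bij_betw_Collect bij_betw_perm_of_orders assms) simp
  then show ?thesis
    unfolding num_avoiding_def by (simp add: bij_betw_same_card)
qed

end
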